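(* Let $A\hookrightarrow B$ be a $G$-Galois extension of $\mathbb{Z}$-graded commutative rings, where $G$ is a finite group. If $A$ is nontrivial only in grade $0$ (i.e. $A_n=0$ for all $n\neq 0$), then $B$ is also nontrivial only in grade $0$.
   Context: All gradings are $\mathbb{Z}$-gradings and rings are unital with unital maps. For commutative (graded) rings $A\subseteq B$ and a finite group $G$, the extension $A\hookrightarrow B$ is called $G$-Galois if $G$ is a subgroup of $\mathrm{Aut}(B/A)$ (in the graded case, $G$ acts by automorphisms preserving the grading), the fixed ring satisfies $B^G=A$, and the map $h:B\otimes_A B\to \mathrm{Map}(G,B)\cong\prod_{g\in G}B$, $h(x\otimes y)(g)=x\cdot g(y)$, is an isomorphism of $B$-algebras. *)

theory Defs
  imports Main "HOL-Library.Poly_Mapping"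
begin

definition is_Z_grading :: "(int \<Rightarrow> 'b::comm_ring_1 set) \<Rightarrow> bool" where
  "is_Z_grading Bg \<longleftrightarrow>
     (\<forall>n. 0 \<in> Bg n \<and> (\<forall>x\<in>Bg n. \<forall>y\<in>Bg n. x + y \<in> Bg n \<and> - x \<in> Bg n)) \<and>
     1 \<in> Bg 0 \<and>
     (\<forall>m n. \<forall>x\<in>Bg m. \<forall>y\<in>Bg n. x * y \<in> Bg (m + n)) \<and>
     (\<forall>b. \<exists>F c. finite F \<and> (\<forall>n\<in>F. c n \<in> Bg n) \<and> b = (\<Sum>n\<in>F. c n)) \<and>
     (\<forall>F c. finite F \<and> (\<forall>n\<in>F. c n \<in> Bg n) \<and> (\<Sum>n\<in>F. c n) = 0 \<longrightarrow> (\<forall>n\<in>F. c n = 0))"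

definition is_graded_subring :: "'b::comm_ring_1 set \<Rightarrow> (int \<Rightarrow> 'b set) \<Rightarrow> bool" where
  "is_graded_subring A Bg \<longleftrightarrow>
     0 \<in> A \<and> 1 \<in> A \<and> (\<forall>x\<in>A. \<forall>y\<in>A. x + y \<in> A \<and> - x \<in> A \<and> x * y \<in> A) \<and>
     (\<forall>a\<in>A. \<exists>F c. finite F \<and> (\<forall>n\<in>F. c n \<in> A \<inter> Bg n) \<and> a = (\<Sum>n\<in>F. c n))"

text \<open>B \<otimes>_A B is the quotient of the free abelian group Z[B \<times> B] (finitely supported
 functions B \<times> B \<Rightarrow> int) by the subgroup tensor_rel A generated by bi-additivity and
 A-balancedness relations.\<close>

inductive_set tensor_rel :: "'b::comm_ring_1 set \<Rightarrow> ('b \<times> 'b \<Rightarrow>\<^sub>0 int) set"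
  for A :: "'b set" where
  zero: "0 \<in> tensor_rel A"
| diff: "z \<in> tensor_rel A \<Longrightarrow> w \<in> tensor_rel A \<Longrightarrow> z - w \<in> tensor_rel A"
| ladd: "Poly_Mapping.single (x + x', y) 1 - Poly_Mapping.single (x, y) 1
           - Poly_Mapping.single (x', y) 1 \<in> tensor_rel A"
| radd: "Poly_Mapping.single (x, y + y') 1 - Poly_Mapping.single (x, y) 1
           - Poly_Mapping.single (x, y') 1 \<in> tensor_rel A"
| bal: "a \<in> A \<Longrightarrow> Poly_Mapping.single (x * a, y) 1 - Poly_Mapping.single (x, a * y) 1
           \<in> tensor_rel A"

text \<open>The map h on formal sums: h(\<Sum> k_i (x_i,y_i))(g) = \<Sum> k_i x_i g(y_i).
 It factors through B \<otimes>_A B when G fixes A.\<close>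

definition galois_h :: "('b \<times> 'b \<Rightarrow>\<^sub>0 int) \<Rightarrow> ('b \<Rightarrow> 'b) \<Rightarrow> 'b::comm_ring_1" where
  "galois_h z g = (\<Sum>p\<in>Poly_Mapping.keys z. of_int (Poly_Mapping.lookup z p) * (fst p * g (snd p)))"

definition is_ring_aut :: "('b::comm_ring_1 \<Rightarrow> 'b) \<Rightarrow> bool" where
  "is_ring_aut g \<longleftrightarrow> bij g \<and> (\<forall>x y. g (x + y) = g x + g y \<and> g (x * y) = g x * g y) \<and> g 1 = 1"

text \<open>G is a finite subgroup of Aut(B/A) consisting of grading-preserving automorphisms,
 B^G = A, and h : B \<otimes>_A B \<rightarrow> Map(G,B) is bijective (it is automatically a homomorphism
 of B-algebras, so this is the isomorphism condition). Injectivity on the quotient: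
 every formal sum in the kernel of h lies in tensor_rel A.\<close>

definition graded_galois :: "'b::comm_ring_1 set \<Rightarrow> (int \<Rightarrow> 'b set) \<Rightarrow> ('b \<Rightarrow> 'b) set \<Rightarrow> bool" where
  "graded_galois A Bg G \<longleftrightarrow>
     finite G \<and> id \<in> G \<and> (\<forall>g\<in>G. \<forall>g'\<in>G. g \<circ> g' \<in> G) \<and> (\<forall>g\<in>G. inv g \<in> G) \<and>
     (\<forall>g\<in>G. is_ring_aut g \<and> (\<forall>a\<in>A. g a = a) \<and> (\<forall>n. g ` Bg n \<subseteq> Bg n)) \<and>
     {b. \<forall>g\<in>G. g b = b} = A \<and>
     (\<forall>z. (\<forall>g\<in>G. galois_h z g = 0) \<longrightarrow> z \<in> tensor_rel A) \<and>
     (\<forall>f :: ('b \<Rightarrow> 'b) \<Rightarrow> 'b. \<exists>z. \<forall>g\<in>G. galois_h z g = f g)"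

end

theory Submission
  imports Defs
begin

text \<open>Choose z = \<Sum> x_i \<otimes> y_i in B \<otimes>_A B with h(z) = \<delta>_id. For b homogeneous of degree n,
  h(b z) = h(z b) because h(z) vanishes off the identity, so b z = z b in B \<otimes>_A B by injectivity
  of h. As A \<subseteq> B_0, the map x \<otimes> y \<mapsto> x y_q (with y_q the degree q component of y) is A-balanced;
  applied to b z = z b it gives b s(q) = b s(q - n) for s(q) = \<Sum> x_i (y_i)_q. Since s has finite
  support and n \<noteq> 0, b s(q) = 0 for every q, whereas \<Sum>_q s(q) = \<Sum> x_i y_i = h(z)(id) = 1.
  Hence b = 0.\<close>

definition tensor_lift :: "('b \<times> 'b \<Rightarrow> 'b) \<Rightarrow> ('b \<times> 'b \<Rightarrow>\<^sub>0 int) \<Rightarrow> 'b::comm_ring_1" where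
  "tensor_lift F z = (\<Sum>p\<in>Poly_Mapping.keys z. of_int (Poly_Mapping.lookup z p) * F p)"

lemma tensor_lift_superset:
  assumes "finite S" "Poly_Mapping.keys z \<subseteq> S"
  shows "tensor_lift F z = (\<Sum>p\<in>S. of_int (Poly_Mapping.lookup z p) * F p)"
  unfolding tensor_lift_def
  by (rule sum.mono_neutral_left) (use assms in \<open>auto simp: in_keys_iff\<close>)

lemma tensor_lift_zero [simp]: "tensor_lift F 0 = 0"
  by (simp add: tensor_lift_def)

lemma tensor_lift_add: "tensor_lift F (z + w) = tensor_lift F z + tensor_lift F w"
proof -
  let ?S = "Poly_Mapping.keys z \<union> Poly_Mapping.keys w"
  have "tensor_lift F (z + w) = (\<Sum>p\<in>?S. of_int (Poly_Mapping.lookup (z + w) p) * F p)"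
    by (rule tensor_lift_superset) (auto simp: keys_add)
  also have "\<dots> = tensor_lift F z + tensor_lift F w"
    by (simp add: tensor_lift_superset[of ?S z] tensor_lift_superset[of ?S w]
        lookup_add distrib_right sum.distrib)
  finally show ?thesis .
qed

lemma tensor_lift_diff: "tensor_lift F (z - w) = tensor_lift F z - tensor_lift F w"
proof -
  let ?S = "Poly_Mapping.keys z \<union> Poly_Mapping.keys w"
  have "tensor_lift F (z - w) = (\<Sum>p\<in>?S. of_int (Poly_Mapping.lookup (z - w) p) * F p)"
    by (rule tensor_lift_superset) (auto simp: in_keys_iff lookup_minus)
  also have "\<dots> = tensor_lift F z - tensor_lift F w"
    by (simp add: tensor_lift_superset[of ?S z] tensor_lift_superset[of ?S w]
        lookup_minus left_diff_distrib sum_subtractf)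
  finally show ?thesis .
qed

lemma tensor_lift_single [simp]: "tensor_lift F (Poly_Mapping.single p k) = of_int k * F p"
  by (subst tensor_lift_superset[of "{p}"]) (auto simp: lookup_single)

lemma tensor_lift_sum: "finite S \<Longrightarrow> tensor_lift F (sum f S) = (\<Sum>s\<in>S. tensor_lift F (f s))"
  by (induction S rule: finite_induct) (auto simp: tensor_lift_add)

lemma tensor_lift_cmult: "tensor_lift (\<lambda>p. c * F p) z = c * tensor_lift F z"
  by (simp add: tensor_lift_def sum_distrib_left mult_ac)

lemma tensor_lift_tensor_rel:
  assumes "z \<in> tensor_rel A"
    and "\<And>x x' y. F (x + x', y) = F (x, y) + F (x', y)"
    and "\<And>x y y'. F (x, y + y') = F (x, y) + F (x, y')"
    and "\<And>a x y. a \<in> A \<Longrightarrow> F (x * a, y) = F (x, a * y)"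
  shows "tensor_lift F z = 0"
  using assms(1) by induction (auto simp: tensor_lift_diff assms(2-4))

lemma galois_h_eq_tensor_lift: "galois_h z g = tensor_lift (\<lambda>p. fst p * g (snd p)) z"
  by (simp add: galois_h_def tensor_lift_def)

lemma grading_zero: "is_Z_grading Bg \<Longrightarrow> 0 \<in> Bg n"
  by (simp add: is_Z_grading_def)

lemma grading_add: "is_Z_grading Bg \<Longrightarrow> x \<in> Bg n \<Longrightarrow> y \<in> Bg n \<Longrightarrow> x + y \<in> Bg n"
  by (simp add: is_Z_grading_def)

lemma grading_diff: "is_Z_grading Bg \<Longrightarrow> x \<in> Bg n \<Longrightarrow> y \<in> Bg n \<Longrightarrow> x - y \<in> Bg n"
  unfolding is_Z_grading_def by (metis diff_conv_add_uminus)

lemma grading_mult: "is_Z_grading Bg \<Longrightarrow> x \<in> Bg m \<Longrightarrow> y \<in> Bg n \<Longrightarrow> x * y \<in> Bg (m + n)"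
  by (simp add: is_Z_grading_def)

lemma grading_decomposition:
  "is_Z_grading Bg \<Longrightarrow> \<exists>F c. finite F \<and> (\<forall>n\<in>F. c n \<in> Bg n) \<and> b = (\<Sum>n\<in>F. c n)"
  by (simp add: is_Z_grading_def)

lemma grading_independent:
  "is_Z_grading Bg \<Longrightarrow> finite F \<Longrightarrow> \<forall>n\<in>F. c n \<in> Bg n \<Longrightarrow> (\<Sum>n\<in>F. c n) = 0 \<Longrightarrow> n \<in> F \<Longrightarrow> c n = 0"
  unfolding is_Z_grading_def by blast

lemma grading_decomposition_unique:
  assumes gr: "is_Z_grading Bg" and F: "finite F" "\<forall>n\<in>F. c n \<in> Bg n"
    and F': "finite F'" "\<forall>n\<in>F'. c' n \<in> Bg n" and eq: "sum c F = sum c' F'"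
  shows "(if n \<in> F then c n else 0) = (if n \<in> F' then c' n else 0)"
proof -
  define d where "d m = (if m \<in> F then c m else 0) - (if m \<in> F' then c' m else 0)" for m
  have "(\<Sum>m\<in>F \<union> F'. if m \<in> F then c m else 0) = sum c F"
    "(\<Sum>m\<in>F \<union> F'. if m \<in> F' then c' m else 0) = sum c' F'"
    by (rule sum.mono_neutral_cong_right; use F F' in auto)+
  then have "(\<Sum>m\<in>F \<union> F'. d m) = 0"
    unfolding d_def sum_subtractf eq by simp
  moreover have "\<forall>m\<in>F \<union> F'. d m \<in> Bg m"
    unfolding d_def using F F' grading_zero[OF gr] grading_diff[OF gr] by auto
  ultimately have "\<forall>m\<in>F \<union> F'. d m = 0"
    using grading_independent[OF gr] F F' by blast
  then show ?thesis unfolding d_def by (cases "n \<in> F \<union> F'") auto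
qed

definition homog_comp :: "(int \<Rightarrow> 'b set) \<Rightarrow> 'b \<Rightarrow> int \<Rightarrow> 'b::comm_ring_1" where
  "homog_comp Bg y n = (THE v. \<exists>F c. finite F \<and> (\<forall>m\<in>F. c m \<in> Bg m) \<and> y = sum c F \<and>
     v = (if n \<in> F then c n else 0))"

lemma homog_comp_eq:
  assumes gr: "is_Z_grading Bg" and F: "finite F" "\<forall>m\<in>F. c m \<in> Bg m" "y = sum c F"
  shows "homog_comp Bg y n = (if n \<in> F then c n else 0)"
  unfolding homog_comp_def
proof (rule the_equality)
  fix v assume "\<exists>F' c'. finite F' \<and> (\<forall>m\<in>F'. c' m \<in> Bg m) \<and> y = sum c' F' \<and>
    v = (if n \<in> F' then c' n else 0)"
  then show "v = (if n \<in> F then c n else 0)"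
    using grading_decomposition_unique[OF gr F(1,2)] F(3) by metis
qed (use F in blast)

lemma homog_comp_in: "is_Z_grading Bg \<Longrightarrow> homog_comp Bg y n \<in> Bg n"
  using grading_decomposition homog_comp_eq grading_zero by metis

lemma finite_homog_support:
  assumes gr: "is_Z_grading Bg"
  shows "finite {n. homog_comp Bg y n \<noteq> 0}"
proof -
  obtain F c where F: "finite F" "\<forall>n\<in>F. c n \<in> Bg n" "y = sum c F"
    using grading_decomposition[OF gr] by blast
  have "{n. homog_comp Bg y n \<noteq> 0} \<subseteq> F"
    using homog_comp_eq[OF gr F] by auto
  then show ?thesis using F(1) finite_subset by blast
qed

lemma homog_decomposition:
  assumes gr: "is_Z_grading Bg" and S: "finite S" "{n. homog_comp Bg y n \<noteq> 0} \<subseteq> S"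
  shows "y = (\<Sum>n\<in>S. homog_comp Bg y n)"
proof -
  obtain F c where F: "finite F" "\<forall>n\<in>F. c n \<in> Bg n" "y = sum c F"
    using grading_decomposition[OF gr] by blast
  have comp: "homog_comp Bg y n = (if n \<in> F then c n else 0)" for n
    using homog_comp_eq[OF gr F] .
  have "y = (\<Sum>n\<in>F. homog_comp Bg y n)"
    unfolding comp using F(3) by simp
  also have "\<dots> = (\<Sum>n\<in>F \<union> S. homog_comp Bg y n)"
    by (rule sum.mono_neutral_left) (use F S comp in auto)
  also have "\<dots> = (\<Sum>n\<in>S. homog_comp Bg y n)"
    by (rule sum.mono_neutral_right) (use F S in auto)
  finally show ?thesis .
qed

lemma homog_comp_add:
  assumes gr: "is_Z_grading Bg"
  shows "homog_comp Bg (x + y) n = homog_comp Bg x n + homog_comp Bg y n"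
proof -
  let ?S = "{n. homog_comp Bg x n \<noteq> 0} \<union> {n. homog_comp Bg y n \<noteq> 0}"
  have S: "finite ?S" using finite_homog_support[OF gr] by blast
  have "x + y = (\<Sum>m\<in>?S. homog_comp Bg x m + homog_comp Bg y m)"
    using homog_decomposition[OF gr S, of x] homog_decomposition[OF gr S, of y]
    by (simp add: sum.distrib)
  then have "homog_comp Bg (x + y) n =
      (if n \<in> ?S then homog_comp Bg x n + homog_comp Bg y n else 0)"
    by (rule homog_comp_eq[OF gr S, rotated])
      (use homog_comp_in[OF gr] grading_add[OF gr] in blast)
  then show ?thesis by auto
qed

lemma homog_comp_mult_homog:
  assumes gr: "is_Z_grading Bg" and b: "b \<in> Bg k"
  shows "homog_comp Bg (b * y) q = b * homog_comp Bg y (q - k)"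
proof -
  let ?F = "{n. homog_comp Bg y n \<noteq> 0}"
  have F: "finite ?F" using finite_homog_support[OF gr] .
  have "b * y = (\<Sum>m\<in>?F. b * homog_comp Bg y m)"
    using homog_decomposition[OF gr F] by (metis order_refl sum_distrib_left)
  also have "\<dots> = (\<Sum>j\<in>(\<lambda>m. m + k) ` ?F. b * homog_comp Bg y (j - k))"
    by (subst sum.reindex) (auto simp: inj_on_def)
  finally have "homog_comp Bg (b * y) q =
      (if q \<in> (\<lambda>m. m + k) ` ?F then b * homog_comp Bg y (q - k) else 0)"
  proof (rule homog_comp_eq[OF gr finite_imageI[OF F], rotated])
    show "\<forall>j\<in>(\<lambda>m. m + k) ` ?F. b * homog_comp Bg y (j - k) \<in> Bg j"
    proof
      fix j
      have "b * homog_comp Bg y (j - k) \<in> Bg (k + (j - k))"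
        by (rule grading_mult[OF gr b homog_comp_in[OF gr]])
      then show "b * homog_comp Bg y (j - k) \<in> Bg j" by simp
    qed
  qed
  then show ?thesis by (cases "homog_comp Bg y (q - k) = 0") force+
qed

lemma graded_subring_degree_zero:
  assumes "is_graded_subring A Bg" "\<forall>n. n \<noteq> 0 \<longrightarrow> A \<inter> Bg n = {0}" "is_Z_grading Bg"
  shows "A \<subseteq> Bg 0"
proof
  fix a assume "a \<in> A"
  then obtain F c where F: "finite F" "\<forall>n\<in>F. c n \<in> A \<inter> Bg n" "a = sum c F"
    using assms(1) unfolding is_graded_subring_def by blast
  have "a = (\<Sum>n\<in>F \<inter> {0}. c n)"
    unfolding F(3) by (rule sum.mono_neutral_right) (use F assms(2) in auto)
  then show "a \<in> Bg 0"
    using F(2) grading_zero[OF assms(3)] by (cases "0 \<in> F") auto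
qed

lemma tensor_lift_homog_comp_sum:
  assumes gr: "is_Z_grading Bg" and "finite Q"
    and "\<forall>p\<in>Poly_Mapping.keys z. {n. homog_comp Bg (snd p) n \<noteq> 0} \<subseteq> Q"
  shows "(\<Sum>q\<in>Q. tensor_lift (\<lambda>p. fst p * homog_comp Bg (snd p) q) z)
    = tensor_lift (\<lambda>p. fst p * snd p) z"
proof -
  have "snd p = (\<Sum>q\<in>Q. homog_comp Bg (snd p) q)" if "p \<in> Poly_Mapping.keys z" for p
    using homog_decomposition[OF gr assms(2)] assms(3) that by blast
  then show ?thesis
    unfolding tensor_lift_def
    by (subst sum.swap) (simp add: sum_distrib_left[symmetric])
qed

definition tensor_scale_left :: "'b \<Rightarrow> ('b \<times> 'b \<Rightarrow>\<^sub>0 int) \<Rightarrow> ('b::comm_ring_1 \<times> 'b \<Rightarrow>\<^sub>0 int)" where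
  "tensor_scale_left b z =
     (\<Sum>p\<in>Poly_Mapping.keys z. Poly_Mapping.single (b * fst p, snd p) (Poly_Mapping.lookup z p))"

definition tensor_scale_right :: "'b \<Rightarrow> ('b \<times> 'b \<Rightarrow>\<^sub>0 int) \<Rightarrow> ('b::comm_ring_1 \<times> 'b \<Rightarrow>\<^sub>0 int)" where
  "tensor_scale_right b z =
     (\<Sum>p\<in>Poly_Mapping.keys z. Poly_Mapping.single (fst p, b * snd p) (Poly_Mapping.lookup z p))"

lemma tensor_lift_scale_left:
  "tensor_lift F (tensor_scale_left b z) = tensor_lift (\<lambda>p. F (b * fst p, snd p)) z"
  by (simp add: tensor_scale_left_def tensor_lift_sum) (simp add: tensor_lift_def)

lemma tensor_lift_scale_right:
  "tensor_lift F (tensor_scale_right b z) = tensor_lift (\<lambda>p. F (fst p, b * snd p)) z"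
  by (simp add: tensor_scale_right_def tensor_lift_sum) (simp add: tensor_lift_def)

lemma galois_h_diff: "galois_h (z - w) g = galois_h z g - galois_h w g"
  by (simp add: galois_h_eq_tensor_lift tensor_lift_diff)

lemma galois_h_scale_left: "galois_h (tensor_scale_left b z) g = b * galois_h z g"
  by (simp add: galois_h_eq_tensor_lift tensor_lift_scale_left mult.assoc tensor_lift_cmult)

lemma galois_h_scale_right:
  assumes "is_ring_aut g"
  shows "galois_h (tensor_scale_right b z) g = g b * galois_h z g"
proof -
  have "galois_h (tensor_scale_right b z) g = tensor_lift (\<lambda>p. g b * (fst p * g (snd p))) z"
    using assms by (simp add: galois_h_eq_tensor_lift tensor_lift_scale_right is_ring_aut_def
        mult.left_commute)
  then show ?thesis by (simp add: tensor_lift_cmult galois_h_eq_tensor_lift)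
qed

lemma graded_galois_ring_aut: "graded_galois A Bg G \<Longrightarrow> g \<in> G \<Longrightarrow> is_ring_aut g"
  by (simp add: graded_galois_def)

lemma graded_galois_h_injective:
  "graded_galois A Bg G \<Longrightarrow> \<forall>g\<in>G. galois_h z g = 0 \<Longrightarrow> z \<in> tensor_rel A"
  by (simp add: graded_galois_def)

lemma graded_galois_h_surjective:
  "graded_galois A Bg G \<Longrightarrow> \<exists>z. \<forall>g\<in>G. galois_h z g = f g"
  by (simp add: graded_galois_def)

lemma scale_left_eq_scale_right:
  assumes "graded_galois A Bg G" and "\<forall>g\<in>G. g \<noteq> id \<longrightarrow> galois_h z g = 0"
  shows "tensor_scale_left b z - tensor_scale_right b z \<in> tensor_rel A"
proof -
  have "galois_h (tensor_scale_left b z - tensor_scale_right b z) g = 0" if g: "g \<in> G" for g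
  proof -
    have "is_ring_aut g" using graded_galois_ring_aut[OF assms(1) g] .
    then have "galois_h (tensor_scale_left b z - tensor_scale_right b z) g = (b - g b) * galois_h z g"
      by (simp add: galois_h_diff galois_h_scale_left galois_h_scale_right left_diff_distrib)
    then show ?thesis using assms(2) g by (cases "g = id") simp_all
  qed
  then show ?thesis using graded_galois_h_injective[OF assms(1)] by blast
qed

text \<open>Only the degree q component of the right factor is kept, which is A-balanced because A
  lies in degree 0; moving the degree n element b across the tensor sign then shifts q by n.\<close>

lemma tensor_homog_comp_shift:
  assumes gr: "is_Z_grading Bg" and A0: "A \<subseteq> Bg 0" and b: "b \<in> Bg n"
    and comm: "tensor_scale_left b z - tensor_scale_right b z \<in> tensor_rel A"
  shows "b * tensor_lift (\<lambda>p. fst p * homog_comp Bg (snd p) q) z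
       = b * tensor_lift (\<lambda>p. fst p * homog_comp Bg (snd p) (q - n)) z"
proof -
  let ?F = "\<lambda>p. fst p * homog_comp Bg (snd p) q"
  have "tensor_lift ?F (tensor_scale_left b z - tensor_scale_right b z) = 0"
    using comm
  proof (rule tensor_lift_tensor_rel)
    show "\<And>a x y. a \<in> A \<Longrightarrow> ?F (x * a, y) = ?F (x, a * y)"
      using homog_comp_mult_homog[OF gr] A0 by (auto simp: mult_ac)
  qed (simp_all add: homog_comp_add[OF gr] algebra_simps)
  then show ?thesis
    by (simp add: tensor_lift_diff tensor_lift_scale_left tensor_lift_scale_right
        homog_comp_mult_homog[OF gr b] mult.left_commute tensor_lift_cmult mult.assoc)
qed

lemma periodic_finite_support_zero:
  fixes f :: "int \<Rightarrow> 'a::zero"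
  assumes "n \<noteq> 0" and periodic: "\<And>q. f q = f (q - n)" and "finite {q. f q \<noteq> 0}"
  shows "f q = 0"
proof -
  have shift: "f q = f (q - int k * n)" for k
  proof (induction k)
    case (Suc k)
    then show ?case using periodic[of "q - int k * n"] by (simp add: algebra_simps)
  qed simp
  have "inj (\<lambda>k::nat. q - int k * n)"
    using assms(1) by (auto simp: inj_def)
  then have "\<not> range (\<lambda>k::nat. q - int k * n) \<subseteq> {q. f q \<noteq> 0}"
    using assms(3) finite_imageD finite_subset infinite_UNIV_nat by blast
  then show ?thesis using shift by auto
qed

lemma homog_mult_contraction_zero:
  assumes gr: "is_Z_grading Bg" and A0: "A \<subseteq> Bg 0" and n: "n \<noteq> 0" and b: "b \<in> Bg n"
    and comm: "tensor_scale_left b z - tensor_scale_right b z \<in> tensor_rel A"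
  shows "b * tensor_lift (\<lambda>p. fst p * snd p) z = 0"
proof -
  define s where "s q = tensor_lift (\<lambda>p. fst p * homog_comp Bg (snd p) q) z" for q
  define Q where "Q = (\<Union>p\<in>Poly_Mapping.keys z. {m. homog_comp Bg (snd p) m \<noteq> 0})"
  have Q: "finite Q" unfolding Q_def by (simp add: finite_homog_support[OF gr])
  have "s q = 0" if "q \<notin> Q" for q
    using that unfolding s_def Q_def tensor_lift_def by (auto intro!: sum.neutral)
  then have "{q. b * s q \<noteq> 0} \<subseteq> Q"
    by (metis (mono_tags) mem_Collect_eq mult_zero_right subsetI)
  moreover have "b * s q = b * s (q - n)" for q
    unfolding s_def by (rule tensor_homog_comp_shift[OF gr A0 b comm])
  ultimately have "b * s q = 0" for q
    using periodic_finite_support_zero[OF n, of "\<lambda>q. b * s q"] Q finite_subset by blast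
  moreover have "(\<Sum>q\<in>Q. s q) = tensor_lift (\<lambda>p. fst p * snd p) z"
    unfolding s_def by (rule tensor_lift_homog_comp_sum[OF gr Q]) (auto simp: Q_def)
  ultimately show ?thesis by (metis sum.neutral sum_distrib_left)
qed

theorem theorem3p2:
  fixes A :: "'b::comm_ring_1 set" and Bg :: "int \<Rightarrow> 'b set" and G :: "('b \<Rightarrow> 'b) set"
  assumes "is_Z_grading Bg"
    and "is_graded_subring A Bg"
    and "graded_galois A Bg G"
    and "\<forall>n. n \<noteq> 0 \<longrightarrow> A \<inter> Bg n = {0}"
  shows "\<forall>n. n \<noteq> 0 \<longrightarrow> Bg n = {0}"
proof (intro allI impI)
  fix n :: int assume n: "n \<noteq> 0"
  obtain z where hz: "\<forall>g\<in>G. galois_h z g = (if g = id then 1 else 0)"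
    using graded_galois_h_surjective[OF assms(3), of "\<lambda>g. if g = id then 1 else 0"] by blast
  have A0: "A \<subseteq> Bg 0" using graded_subring_degree_zero[OF assms(2,4,1)] .
  have "b = 0" if b: "b \<in> Bg n" for b
  proof -
    have comm: "tensor_scale_left b z - tensor_scale_right b z \<in> tensor_rel A"
      using scale_left_eq_scale_right[OF assms(3)] hz by simp
    have "galois_h z id = 1"
      using hz assms(3) by (simp add: graded_galois_def)
    then have "b = b * tensor_lift (\<lambda>p. fst p * snd p) z"
      by (simp add: galois_h_eq_tensor_lift)
    also have "\<dots> = 0"
      by (rule homog_mult_contraction_zero[OF assms(1) A0 n b comm])
    finally show ?thesis .
  qed
  then show "Bg n = {0}" using grading_zero[OF assms(1)] by blast
qed

end
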